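(* Let $(\mathrm{FE}_{n,M,Q})_{n,M,Q\in\mathbb Z}\subseteq\mathbb N_0$ satisfy for all $n,M,Q\in\mathbb N$ that $\mathrm{FE}_{0,M,Q}=0$ and $$\mathrm{FE}_{n,M,Q}\le M^n+\sum_{l=0}^{n-1}\Big[QM^{n-l}\big(1+\mathrm{FE}_{l,M,Q}+\mathbb 1_{\mathbb N}(l)+\mathbb 1_{\mathbb N}(l)\,\mathrm{FE}_{l-1,M,Q}\big)\Big].$$ Then for all $N\in\mathbb N$, $\mathrm{FE}_{N,N,N}\le 8N^{2N}$.
   Context: $\mathbb 1_{\mathbb N}(l)$ equals $1$ if $l\in\mathbb N=\{1,2,\dots\}$ and $0$ otherwise. *)

theory Defs
  imports Main
begin

definition indN :: "int \<Rightarrow> nat" where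
  "indN l = (if l \<ge> 1 then 1 else 0)"

end

theory Submission
  imports Defs Complex_Main
begin

text \<open>With \<open>L = MQ + M + 1\<close>, strong induction gives \<open>FE(n) + 1 \<le> L^n\<close>: once this bound
  is inserted into the recursion, the right-hand side is a weighted geometric sum that stays
  below \<open>L^n\<close>. For \<open>M = Q = N\<close> one has \<open>(N^2 + N + 1)^N = N^(2N) (1 + 1/N + 1/N^2)^N\<close>, and the
  last factor is at most \<open>exp (1 + 1/N) \<le> exp (3/2) \<le> 8\<close> (the case \<open>N = 1\<close> is direct).\<close>

lemma sum_weighted_powers_Suc:
  fixes M Q :: nat and f :: "nat \<Rightarrow> nat"
  shows "(\<Sum>l<Suc n. Q * M ^ (Suc n - l) * f l) = M * (\<Sum>l<n. Q * M ^ (n - l) * f l) + Q * M * f n"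
proof -
  have "(\<Sum>l<n. Q * M ^ (Suc n - l) * f l) = (\<Sum>l<n. M * (Q * M ^ (n - l) * f l))"
    by (rule sum.cong) (auto simp: Suc_diff_le)
  then show ?thesis by (simp add: sum_distrib_left)
qed

lemma weighted_power_sum_le_power:
  fixes M Q L :: nat
  assumes L: "M * Q + M + 1 \<le> L" and n: "n \<ge> 1"
  shows "M ^ n + (\<Sum>l<n. Q * M ^ (n - l) * (L ^ l + (if l \<ge> 1 then L ^ (l - 1) else 0))) + 1
         \<le> L ^ n"
  using n
proof (induction n rule: dec_induct)
  case base
  show ?case using L by (simp add: algebra_simps)
next
  case (step n)
  define f where "f l = L ^ l + (if l \<ge> 1 then L ^ (l - 1) else 0)" for l
  define S where "S = (\<Sum>l<n. Q * M ^ (n - l) * f l)"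
  have IH: "M ^ n + S + 1 \<le> L ^ n" using step.IH unfolding S_def f_def .
  have f_n: "f n = L ^ n + L ^ (n - 1)" using step.hyps unfolding f_def by simp
  have L_pow: "L ^ n = L * L ^ (n - 1)" using step.hyps by (simp flip: power_Suc)
  have "1 \<le> L ^ (n - 1)" using L by simp
  then have "Q * M * L ^ (n - 1) + 1 \<le> (Q * M + 1) * L ^ (n - 1)" by (simp add: algebra_simps)
  also have "\<dots> \<le> L ^ n" unfolding L_pow using L by (intro mult_right_mono) (auto simp: mult.commute)
  finally have small: "Q * M * L ^ (n - 1) + 1 \<le> L ^ n" .
  have "M ^ Suc n + (M * S + Q * M * f n) + 1
        = M * (M ^ n + S + 1) + Q * M * L ^ n + (Q * M * L ^ (n - 1) + 1) - M"
    by (simp add: f_n algebra_simps)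
  also have "\<dots> \<le> M * L ^ n + Q * M * L ^ n + L ^ n"
    using mult_le_mono2[OF IH, of M] small by linarith
  also have "\<dots> = (M * Q + M + 1) * L ^ n" by (simp add: algebra_simps)
  also have "\<dots> \<le> L ^ Suc n" using L by (simp del: add_Suc_right)
  finally show ?case unfolding S_def f_def sum_weighted_powers_Suc .
qed

lemma recursive_bound_Suc_le_power:
  fixes F :: "nat \<Rightarrow> nat" and M Q :: nat
  assumes F_0: "F 0 = 0"
    and F_rec: "\<And>n. n \<ge> 1 \<Longrightarrow> F n \<le> M ^ n + (\<Sum>l<n. Q * M ^ (n - l) *
      (1 + F l + (if l \<ge> 1 then 1 + F (l - 1) else 0)))"
  shows "F n + 1 \<le> (M * Q + M + 1) ^ n"
proof (induction n rule: less_induct)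
  case (less n)
  define L where "L = M * Q + M + 1"
  show ?case
  proof (cases "n = 0")
    case True
    then show ?thesis using F_0 by simp
  next
    case False
    then have n: "n \<ge> 1" by simp
    have term_le: "1 + F l + (if l \<ge> 1 then 1 + F (l - 1) else 0)
        \<le> L ^ l + (if l \<ge> 1 then L ^ (l - 1) else 0)" if "l < n" for l
      using less.IH[of l] less.IH[of "l - 1"] that unfolding L_def by fastforce
    have "F n \<le> M ^ n + (\<Sum>l<n. Q * M ^ (n - l) *
        (1 + F l + (if l \<ge> 1 then 1 + F (l - 1) else 0)))"
      using F_rec[OF n] .
    also have "\<dots> \<le> M ^ n + (\<Sum>l<n. Q * M ^ (n - l) * (L ^ l + (if l \<ge> 1 then L ^ (l - 1) else 0)))"
      by (intro add_left_mono sum_mono mult_left_mono term_le) auto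
    finally show ?thesis
      using weighted_power_sum_le_power[of M Q L n] n unfolding L_def by simp
  qed
qed

lemma exp_three_halves_le_8: "exp (3/2 :: real) \<le> 8"
proof -
  have "exp (3/2 :: real) ^ 2 = exp 1 ^ 3"
    by (simp flip: exp_of_nat_mult)
  also have "\<dots> \<le> 3 ^ 3" by (intro power_mono) (auto simp: exp_le)
  also have "\<dots> \<le> (8 :: real) ^ 2" by simp
  finally show ?thesis by (rule power2_le_imp_le) simp
qed

lemma square_plus_Suc_power_le:
  fixes N :: nat
  assumes "N \<ge> 1"
  shows "(N * N + N + 1) ^ N \<le> 8 * N ^ (2 * N)"
proof (cases "N = 1")
  case True
  then show ?thesis by simp
next
  case False
  with assms have N: "N \<ge> 2" by simp
  define x :: real where "x = 1 / N + 1 / (real N)\<^sup>2"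
  have base_eq: "real (N * N + N + 1) = (real N)\<^sup>2 * (1 + x)"
    unfolding x_def using N by (simp add: field_simps power2_eq_square)
  have "(1 + x) ^ N \<le> exp x ^ N"
    by (intro power_mono) (auto simp: x_def)
  also have "\<dots> = exp (1 + 1 / N)"
    using N by (simp add: x_def flip: exp_of_nat_mult) (simp add: field_simps power2_eq_square)
  also have "\<dots> \<le> exp (3/2)"
    using N by (simp add: field_simps)
  also have "\<dots> \<le> 8" by (rule exp_three_halves_le_8)
  finally have "(1 + x) ^ N \<le> 8" .
  then have "real ((N * N + N + 1) ^ N) \<le> ((real N)\<^sup>2) ^ N * 8"
    unfolding of_nat_power base_eq power_mult_distrib by (intro mult_left_mono) auto
  also have "\<dots> = real (8 * N ^ (2 * N))" by (simp add: power_mult)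
  finally show ?thesis by linarith
qed

theorem lemma3p16:
  fixes FE :: "int \<Rightarrow> int \<Rightarrow> int \<Rightarrow> nat"
  assumes base: "\<And>M Q :: nat. M \<ge> 1 \<Longrightarrow> Q \<ge> 1 \<Longrightarrow> FE 0 (int M) (int Q) = 0"
    and rec: "\<And>n M Q :: nat. n \<ge> 1 \<Longrightarrow> M \<ge> 1 \<Longrightarrow> Q \<ge> 1 \<Longrightarrow>
      FE (int n) (int M) (int Q) \<le> M ^ n + (\<Sum>l<n. Q * M ^ (n - l) *
        (1 + FE (int l) (int M) (int Q) + indN (int l)
           + indN (int l) * FE (int l - 1) (int M) (int Q)))"
  shows "\<And>N :: nat. N \<ge> 1 \<Longrightarrow> FE (int N) (int N) (int N) \<le> 8 * N ^ (2 * N)"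
proof -
  fix N :: nat
  assume N: "N \<ge> 1"
  define F where "F l = FE (int l) (int N) (int N)" for l
  have summand_eq: "1 + FE (int l) (int N) (int N) + indN (int l) + indN (int l) * FE (int l - 1) (int N) (int N)
      = 1 + F l + (if l \<ge> 1 then 1 + F (l - 1) else 0)" for l
    by (cases "l \<ge> 1") (auto simp: F_def indN_def of_nat_diff)
  have "F N + 1 \<le> (N * N + N + 1) ^ N"
    using recursive_bound_Suc_le_power[of F N N] base[OF N N] rec[OF _ N N]
    unfolding summand_eq by (simp add: F_def)
  then show "FE (int N) (int N) (int N) \<le> 8 * N ^ (2 * N)"
    using square_plus_Suc_power_le[OF N] by (simp add: F_def)
qed

end
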